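(* Let $\mathbf{T}\in\mathbb{R}^{d\times T}$ have full column rank $T$, let $1\le M<T$, let $\kappa>0$, and let $\mathbf{G}=\mathbf{T}^\top\mathbf{T}$ have eigenvalues $\lambda_1(\mathbf{G})\ge\dots\ge\lambda_T(\mathbf{G})$ with $\lambda_M(\mathbf{G})>\lambda_{M+1}(\mathbf{G})$. Let $S_\star\subseteq\mathbb{R}^T$ be the span of eigenvectors of $\mathbf{G}$ for the top $M$ eigenvalues. For $\mathbf{A}\in\mathbb{R}^{T\times M}$ let $\mathbf{W}_e(\mathbf{A})\in\mathbb{R}^{T\times M}$ be the matrix whose $m$-th column is $\mathrm{softmax}(\mathbf{A}_{:,m}/\kappa)$. Then there exist $\mathbf{A}\in\mathbb{R}^{T\times M}$ and $\mathbf{W}_d\in\mathbb{R}^{M\times T}$ with $$\|\mathbf{T}\mathbf{W}_e(\mathbf{A})\mathbf{W}_d-\mathbf{T}\|_F^2=\sum_{i=M+1}^{T}\lambda_i(\mathbf{G})$$ (i.e., the softmax-encoder linear autoencoder attains the optimal rank-$M$ reconstruction error) if and only if there exist $M$ linearly independent vectors $x_1,\dots,x_M\in S_\star$ all of whose coordinates are strictly positive.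
   Context: $\mathrm{softmax}(z)_i=e^{z_i}/\sum_j e^{z_j}$. $\|\cdot\|_F$ is the Frobenius norm. For every $\mathbf{W}_e,\mathbf{W}_d$ of these shapes, $\|\mathbf{T}\mathbf{W}_e\mathbf{W}_d-\mathbf{T}\|_F^2\ge\sum_{i=M+1}^T\lambda_i(\mathbf{G})$ (the Eckart–Young bound), so the claim characterizes when this lower bound is achieved with a softmax-activated encoder. *)

theory Defs
  imports "HOL-Analysis.Analysis" "HOL-Computational_Algebra.Polynomial"
begin

definition charpoly :: "real^'n^'n \<Rightarrow> real poly" where
  "charpoly A = det ((\<chi> i j. (if i = j then [:0, 1:] else 0) - [:A$i$j:]) :: real poly^'n^'n)"

text \<open>Eigenvalues with multiplicity (roots of the characteristic polynomial),
  sorted in non-increasing order; eigval A i is the i-th one, 1-based.\<close>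
definition eigvals_desc :: "real^'n^'n \<Rightarrow> real list" where
  "eigvals_desc A = rev (sorted_list_of_multiset (proots (charpoly A)))"

definition eigval :: "real^'n^'n \<Rightarrow> nat \<Rightarrow> real" where
  "eigval A i = eigvals_desc A ! (i - 1)"

definition top_eigenspace :: "real^'n^'n \<Rightarrow> nat \<Rightarrow> (real^'n) set" where
  "top_eigenspace A M = span {v. \<exists>i\<in>{1..M}. A *v v = eigval A i *\<^sub>R v}"

definition softmax :: "real^'n \<Rightarrow> real^'n" where
  "softmax z = (\<chi> i. exp (z$i) / (\<Sum>j\<in>UNIV. exp (z$j)))"

definition softmax_enc :: "real \<Rightarrow> real^'m^'t \<Rightarrow> real^'m^'t" where
  "softmax_enc \<kappa> A = transpose (\<chi> m. softmax ((1/\<kappa>) *\<^sub>R column m A))"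

definition frob_norm :: "real^'n^'m \<Rightarrow> real" where
  "frob_norm X = sqrt (\<Sum>i\<in>UNIV. \<Sum>j\<in>UNIV. (X$i$j)^2)"

end

theory Submission
  imports Defs
begin

text \<open>Diagonalise the Gram matrix \<open>G = T\<^sup>T T\<close> in an orthonormal eigenbasis \<open>v\<^sub>t\<close> with
  eigenvalues \<open>\<mu>\<^sub>t > 0\<close>. For \<open>B = W\<^sub>e W\<^sub>d\<close> the squared error \<open>\<parallel>T B - T\<parallel>\<^sup>2\<close> equals
  \<open>\<Sum>\<^sub>t \<mu>\<^sub>t \<parallel>B\<^sup>T v\<^sub>t - v\<^sub>t\<parallel>\<^sup>2\<close>, and \<open>B\<^sup>T v\<^sub>t\<close> lies in a subspace of dimension at most \<open>M\<close>.
  If \<open>p\<^sub>t\<close> is the squared length of the projection of \<open>v\<^sub>t\<close> onto that subspace, then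
  \<open>0 \<le> p\<^sub>t \<le> 1\<close> and \<open>\<Sum> p\<^sub>t \<le> M\<close>, so the error is at least \<open>\<Sum>\<^sub>t \<mu>\<^sub>t (1 - p\<^sub>t)\<close>, which
  the eigengap bounds below by the tail sum, with equality only if \<open>B\<^sup>T\<close> is the orthogonal
  projection onto the top eigenspace \<open>S\<^sub>\<star>\<close>. Then \<open>B\<close> fixes \<open>S\<^sub>\<star>\<close>, so the \<open>M\<close> columns of the
  encoder, which are positive, form a basis of \<open>S\<^sub>\<star>\<close>. Conversely, a positive basis of \<open>S\<^sub>\<star>\<close>
  normalised to unit column sums is a softmax image (take logarithms), and a decoder
  expressing the top eigenvectors in this basis realises the projection.\<close>

lemma matrix_vector_mult_inner_transpose:
  "((A::real^'n^'m) *v x) \<bullet> y = x \<bullet> (transpose A *v y)"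
  by (metis dot_lmul_matrix vector_transpose_matrix)

lemma symmetric_matrix_inner_commute:
  fixes G :: "real^'n^'n"
  assumes "transpose G = G"
  shows "x \<bullet> (G *v y) = (G *v x) \<bullet> y"
  by (metis assms matrix_vector_mult_inner_transpose)

lemma linear_coeff_eq_0_if_quadratic_nonpos:
  fixes a q :: real
  assumes "\<And>t. 2*t*a + t^2 * q \<le> 0"
  shows "a = 0"
proof -
  define r where "r = \<bar>q\<bar> + 1"
  have r: "r > 0" "2 * r + q > 0" unfolding r_def by (auto simp: abs_if)
  have "(2*(a/r)*a + (a/r)^2 * q) * r^2 \<le> 0"
    using assms[of "a/r"] by (simp add: mult_nonpos_nonneg)
  also have "(2*(a/r)*a + (a/r)^2 * q) * r^2 = a^2 * (2 * r + q)"
    using r by (simp add: field_simps power2_eq_square)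
  finally have "a^2 \<le> 0" using r(2) by (simp add: mult_le_0_iff)
  then show ?thesis by simp
qed

text \<open>Perturbing the maximiser within the subspace orthogonally to itself cannot increase the
  Rayleigh quotient, so \<open>G x\<^sub>0 - \<lambda> x\<^sub>0\<close>, which lies in the subspace and is orthogonal to
  \<open>x\<^sub>0\<close>, vanishes.\<close>
lemma symmetric_rayleigh_maximiser_eigenvector:
  fixes G :: "real^'n^'n"
  assumes sym: "transpose G = G" and S: "subspace S" and inv: "\<And>x. x \<in> S \<Longrightarrow> G *v x \<in> S"
    and x0S: "x0 \<in> S" and x0x0: "x0 \<bullet> x0 = 1"
    and max: "\<And>w. w \<in> S \<Longrightarrow> w \<bullet> (G *v w) \<le> (x0 \<bullet> (G *v x0)) * (w \<bullet> w)"
  shows "G *v x0 = (x0 \<bullet> (G *v x0)) *\<^sub>R x0"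
proof -
  define lam where "lam = x0 \<bullet> (G *v x0)"
  have stationary: "z \<bullet> (G *v x0) = 0" if zS: "z \<in> S" and zo: "z \<bullet> x0 = 0" for z
  proof (rule linear_coeff_eq_0_if_quadratic_nonpos)
    fix t :: real
    have "x0 + t *\<^sub>R z \<in> S" using zS x0S S by (simp add: subspace_add subspace_scale)
    moreover have "x0 \<bullet> (G *v z) = z \<bullet> (G *v x0)"
      using symmetric_matrix_inner_commute[OF sym] by (simp add: inner_commute)
    ultimately have "lam + 2*t*(z \<bullet> (G *v x0)) + t^2 * (z \<bullet> (G *v z)) \<le> lam * (1 + t^2 * (z \<bullet> z))"
      using max[of "x0 + t *\<^sub>R z"] zo x0x0
      by (simp add: inner_commute lam_def power2_eq_square algebra_simps)
    then show "2*t*(z \<bullet> (G *v x0)) + t^2 * (z \<bullet> (G *v z) - lam * (z \<bullet> z)) \<le> 0"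
      by (simp add: algebra_simps)
  qed
  define r where "r = G *v x0 - lam *\<^sub>R x0"
  have rS: "r \<in> S" unfolding r_def using inv x0S S by (simp add: subspace_diff subspace_scale)
  have "r \<bullet> x0 = 0"
    unfolding r_def using x0x0 by (simp add: inner_diff_left inner_diff_right lam_def inner_commute)
  with stationary[OF rS] have "r \<bullet> r = 0"
    unfolding r_def by (simp add: algebra_simps)
  then show ?thesis unfolding r_def lam_def by simp
qed

lemma symmetric_invariant_subspace_unit_eigenvector:
  fixes G :: "real^'n^'n"
  assumes sym: "transpose G = G" and S: "subspace S" and inv: "\<And>x. x \<in> S \<Longrightarrow> G *v x \<in> S"
    and nontriv: "S \<noteq> {0}"
  obtains x lam where "x \<in> S" "norm x = 1" "G *v x = lam *\<^sub>R x"
proof -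
  obtain y where y: "y \<in> S" "y \<noteq> 0" using nontriv S subspace_0 by blast
  let ?K = "S \<inter> sphere 0 1"
  have "compact ?K" using closed_subspace[OF S] by (simp add: closed_Int_compact)
  moreover have "(1/norm y) *\<^sub>R y \<in> ?K" using y S by (auto simp: subspace_scale)
  moreover have "continuous_on ?K (\<lambda>x. x \<bullet> (G *v x))"
    by (intro continuous_intros linear_continuous_on matrix_vector_mul_linear)
  ultimately obtain x0 where x0: "x0 \<in> ?K" and max: "\<forall>z\<in>?K. z \<bullet> (G *v z) \<le> x0 \<bullet> (G *v x0)"
    using continuous_attains_sup[of ?K] by blast
  have x0S: "x0 \<in> S" and nx0: "norm x0 = 1" using x0 by auto
  have "w \<bullet> (G *v w) \<le> (x0 \<bullet> (G *v x0)) * (w \<bullet> w)" if "w \<in> S" for w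
  proof (cases "w = 0")
    case False
    have "(1/norm w) *\<^sub>R w \<in> ?K" using that False S by (auto simp: subspace_scale)
    from max[rule_format, OF this] have "w \<bullet> (G *v w) / (norm w * norm w) \<le> x0 \<bullet> (G *v x0)"
      by (simp add: matrix_vector_mult_scaleR)
    then show ?thesis
      using False by (simp add: divide_le_eq power2_norm_eq_inner[symmetric] power2_eq_square)
  qed simp
  then have "G *v x0 = (x0 \<bullet> (G *v x0)) *\<^sub>R x0"
    using symmetric_rayleigh_maximiser_eigenvector[OF sym S inv x0S] nx0 by (simp add: dot_square_norm)
  with x0S nx0 show ?thesis by (rule that)
qed

lemma span_insert_orthogonal_slice:
  assumes S: "subspace S" and x0S: "x0 \<in> S" and x0x0: "x0 \<bullet> x0 = 1"
    and B: "span B = {z \<in> S. z \<bullet> x0 = 0}"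
  shows "span (insert x0 B) = S"
proof
  show "span (insert x0 B) \<subseteq> S"
    using span_superset[of B] B x0S S by (intro span_minimal) auto
  show "S \<subseteq> span (insert x0 B)"
  proof
    fix w assume wS: "w \<in> S"
    have "w - (w \<bullet> x0) *\<^sub>R x0 \<in> span B"
      unfolding B using wS x0S S x0x0 by (simp add: subspace_diff subspace_scale inner_diff_left)
    then have "w - (w \<bullet> x0) *\<^sub>R x0 \<in> span (insert x0 B)"
      using span_mono[of B "insert x0 B"] by auto
    moreover have "(w \<bullet> x0) *\<^sub>R x0 \<in> span (insert x0 B)" by (simp add: span_base span_scale)
    ultimately show "w \<in> span (insert x0 B)" using span_add by fastforce
  qed
qed

lemma symmetric_invariant_subspace_orthonormal_eigenbasis:
  fixes G :: "real^'n^'n"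
  assumes sym: "transpose G = G"
  shows "subspace S \<Longrightarrow> (\<And>x. x \<in> S \<Longrightarrow> G *v x \<in> S) \<Longrightarrow>
     \<exists>B. B \<subseteq> S \<and> finite B \<and> pairwise orthogonal B \<and> (\<forall>x\<in>B. norm x = 1) \<and> span B = S
        \<and> (\<forall>x\<in>B. \<exists>c. G *v x = c *\<^sub>R x)"
proof (induction "dim S" arbitrary: S rule: less_induct)
  case less
  show ?case
  proof (cases "S = {0}")
    case True
    then show ?thesis by (intro exI[of _ "{}"]) auto
  next
    case False
    obtain x0 lam where x0S: "x0 \<in> S" and nx0: "norm x0 = 1" and ev: "G *v x0 = lam *\<^sub>R x0"
      using symmetric_invariant_subspace_unit_eigenvector[OF sym less.prems False] by blast
    have x0x0: "x0 \<bullet> x0 = 1" using nx0 by (simp add: dot_square_norm)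
    define S' where "S' = {z \<in> S. z \<bullet> x0 = 0}"
    have sub': "subspace S'" unfolding S'_def using less.prems(1)
      by (auto simp: subspace_def inner_add_left)
    have inv': "G *v z \<in> S'" if "z \<in> S'" for z
      using that less.prems(2) symmetric_matrix_inner_commute[OF sym, of z x0] ev
      unfolding S'_def by (auto simp: inner_commute)
    have "x0 \<notin> S'" using x0x0 unfolding S'_def by auto
    then have "S' \<subset> S" using x0S unfolding S'_def by blast
    then have "dim S' < dim S"
      using dim_psubset span_eq_iff sub' less.prems(1) by metis
    then obtain B' where B': "B' \<subseteq> S'" "finite B'" "pairwise orthogonal B'" "\<forall>x\<in>B'. norm x = 1"
      "span B' = S'" "\<forall>x\<in>B'. \<exists>c. G *v x = c *\<^sub>R x"
      using less.hyps[OF _ sub' inv'] by blast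
    have "span (insert x0 B') = S"
      using span_insert_orthogonal_slice[OF less.prems(1) x0S x0x0] B'(5) unfolding S'_def by blast
    then show ?thesis
      using B' x0S nx0 ev unfolding S'_def pairwise_def orthogonal_def
      by (intro exI[of _ "insert x0 B'"]) (auto simp: inner_commute)
  qed
qed

lemma symmetric_matrix_orthonormal_eigenbasis:
  fixes G :: "real^'n^'n"
  assumes sym: "transpose G = G"
  obtains v :: "'n \<Rightarrow> real^'n" and mu :: "'n \<Rightarrow> real"
  where "\<And>s t. v s \<bullet> v t = (if s = t then 1 else 0)" "\<And>t. G *v v t = mu t *\<^sub>R v t"
    "\<And>x. (\<Sum>t\<in>UNIV. (x \<bullet> v t) *\<^sub>R v t) = x"
proof -
  obtain B where B: "finite B" "pairwise orthogonal B" "\<forall>x\<in>B. norm x = 1" "span B = UNIV"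
     "\<forall>x\<in>B. \<exists>c. G *v x = c *\<^sub>R x"
    using symmetric_invariant_subspace_orthonormal_eigenbasis[OF sym, of UNIV] by auto
  have "0 \<notin> B" using B(3) by force
  then have "independent B" using B(2) pairwise_orthogonal_independent by blast
  then have "card B = dim (UNIV :: (real^'n) set)"
    using B(4) by (metis dim_eq_card_independent dim_span)
  then obtain h where h: "bij_betw h (UNIV :: 'n set) B"
    using finite_same_card_bij[of "UNIV :: 'n set" B] B(1) by auto
  then have hB: "\<And>t. h t \<in> B" and h_inj: "inj h"
    using bij_betwE bij_betw_imp_inj_on by blast+
  show ?thesis
  proof
    fix s t
    show "h s \<bullet> h t = (if s = t then 1 else 0)"
    proof (cases "s = t")
      case True
      then show ?thesis using B(3) hB[of t] by (simp add: norm_eq_1)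
    next
      case False
      then show ?thesis using B(2) hB[of s] hB[of t] injD[OF h_inj, of s t]
        unfolding pairwise_def orthogonal_def by auto
    qed
  next
    fix t
    show "G *v h t = (SOME c. G *v h t = c *\<^sub>R h t) *\<^sub>R h t"
      using B(5) hB[of t] by (meson someI_ex)
  next
    fix x
    have "(\<Sum>i\<in>B. (x \<bullet> i) *\<^sub>R i) = x"
      using orthonormal_basis_expand[OF B(2) _ _ B(1)] B(3,4) by auto
    then show "(\<Sum>t\<in>UNIV. (x \<bullet> h t) *\<^sub>R h t) = x"
      using sum.reindex_bij_betw[OF h, of "\<lambda>i. (x \<bullet> i) *\<^sub>R i"] by simp
  qed
qed

definition poly_const_matrix :: "'a::comm_ring_1^'n^'m \<Rightarrow> 'a poly^'n^'m" where
  "poly_const_matrix A = (\<chi> i j. [:A$i$j:])"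

lemma poly_const_matrix_mult: "poly_const_matrix (A ** B) = poly_const_matrix A ** poly_const_matrix B"
  by (simp add: poly_const_matrix_def vec_eq_iff matrix_matrix_mult_def mult_to_poly sum_to_poly mult.commute)

lemma poly_const_matrix_mat_1: "poly_const_matrix (mat 1 :: 'a::comm_ring_1^'n^'n) = mat 1"
  by (simp add: poly_const_matrix_def vec_eq_iff mat_def)

lemma matrix_mult_diagonal_mult_nth:
  fixes A :: "'a::comm_ring_1^'n^'m" and B :: "'a^'p^'n"
  shows "(A ** (\<chi> i j. if i = j then d i else 0) ** B)$i$j = (\<Sum>k\<in>UNIV. A$i$k * d k * B$k$j)"
proof -
  have "(A ** (\<chi> i j. if i = j then d i else 0))$i$k = A$i$k * d k" for i k
    by (simp add: matrix_matrix_mult_def if_distrib cong: if_cong)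
  then show ?thesis by (simp add: matrix_matrix_mult_def)
qed

lemma matrix_mult_diff_mult:
  fixes A :: "'a::comm_ring_1^'n^'m" and B C :: "'a^'p^'n" and D :: "'a^'q^'p"
  shows "A ** (B - C) ** D = A ** B ** D - A ** C ** D"
  by (simp add: vec_eq_iff matrix_matrix_mult_def sum_subtractf left_diff_distrib right_diff_distrib)

lemma charpoly_eq_det_poly_const_matrix:
  "charpoly A = det ((\<chi> i j. if i = j then [:0, 1:] else 0) - poly_const_matrix A)"
  unfolding charpoly_def poly_const_matrix_def by (rule arg_cong[where f = det]) (simp add: vec_eq_iff)

lemma charpoly_similar:
  fixes A :: "real^'n^'n" and P Q :: "real^'n^'n"
  assumes PQ: "P ** Q = mat 1"
  shows "charpoly (P ** A ** Q) = charpoly A"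
proof -
  let ?X = "(\<chi> i j. if i = j then [:0, 1:] else 0) :: real poly^'n^'n"
  let ?P = "poly_const_matrix P" and ?Q = "poly_const_matrix Q"
  have PQ': "?P ** ?Q = mat 1" by (simp add: poly_const_matrix_mult[symmetric] PQ poly_const_matrix_mat_1)
  have "?P ** ?X ** ?Q = ?X"
  proof -
    have "(?P ** ?X ** ?Q)$i$j = ?X$i$j" for i j
    proof -
      have "(?P ** ?X ** ?Q)$i$j = (\<Sum>k\<in>UNIV. ?P$i$k * [:0, 1:] * ?Q$k$j)"
        by (rule matrix_mult_diagonal_mult_nth)
      also have "\<dots> = [:0, 1:] * (?P ** ?Q)$i$j"
        by (simp only: matrix_matrix_mult_def vec_lambda_beta sum_distrib_left mult_ac)
      finally show ?thesis using PQ' by (simp add: mat_def)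
    qed
    then show ?thesis by (simp add: vec_eq_iff)
  qed
  then have "?X - poly_const_matrix (P ** A ** Q) = ?P ** (?X - poly_const_matrix A) ** ?Q"
    by (simp add: poly_const_matrix_mult matrix_mult_diff_mult)
  then have "charpoly (P ** A ** Q) = det ?P * det (?X - poly_const_matrix A) * det ?Q"
    by (simp add: charpoly_eq_det_poly_const_matrix det_mul)
  also have "\<dots> = det (?X - poly_const_matrix A)"
    using PQ' det_mul[of ?P ?Q] by (simp add: mult_ac)
  finally show ?thesis by (simp add: charpoly_eq_det_poly_const_matrix)
qed

lemma charpoly_diagonal:
  "charpoly ((\<chi> i j. if i = j then d i else 0) :: real^'n^'n) = (\<Prod>i\<in>UNIV. [:- d i, 1:])"
  unfolding charpoly_def by (subst det_diagonal) auto

lemma sorted_rev_filter_ge_nth: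
  fixes L :: "'a::linorder list"
  assumes sr: "sorted (rev L)" and M: "0 < M" "M < length L" and gap: "L!M < L!(M-1)"
  shows "filter (\<lambda>x. L!(M-1) \<le> x) L = take M L" "filter (\<lambda>x. \<not> L!(M-1) \<le> x) L = drop M L"
proof -
  have above: "L!(M-1) \<le> x" if "x \<in> set (take M L)" for x
    using that sorted_rev_nth_mono[OF sr, of _ "M-1"] M by (auto simp: in_set_conv_nth)
  have below: "\<not> L!(M-1) \<le> x" if "x \<in> set (drop M L)" for x
  proof -
    obtain j where "j < length L - M" "x = L!(M+j)" using \<open>x \<in> set (drop M L)\<close> M
      by (auto simp: in_set_conv_nth)
    then have "x \<le> L!M" using sorted_rev_nth_mono[OF sr, of M "M+j"] by simp
    then show ?thesis using gap by simp
  qed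
  have "filter P L = filter P (take M L) @ filter P (drop M L)" for P
    by (metis append_take_drop_id filter_append)
  then show "filter (\<lambda>x. L!(M-1) \<le> x) L = take M L" "filter (\<lambda>x. \<not> L!(M-1) \<le> x) L = drop M L"
    using above below by simp_all
qed

locale orthonormal_eigenbasis =
  fixes G :: "real^'n^'n" and v :: "'n \<Rightarrow> real^'n" and mu :: "'n \<Rightarrow> real"
  assumes symmetric: "transpose G = G"
    and orthonormal: "\<And>s t. v s \<bullet> v t = (if s = t then 1 else 0)"
    and eigvec: "\<And>t. G *v v t = mu t *\<^sub>R v t"
    and expand: "\<And>x. (\<Sum>t\<in>UNIV. (x \<bullet> v t) *\<^sub>R v t) = x"
begin

lemma inner_eigvec_self [simp]: "v t \<bullet> v t = 1"
  using orthonormal by simp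

lemma inj_eigvec: "inj v"
proof (rule injI)
  fix s t assume "v s = v t"
  then have "v s \<bullet> v t = 1" by simp
  then show "s = t" using orthonormal[of s t] by (auto split: if_splits)
qed

lemma inner_eq_sum_coords: "x \<bullet> y = (\<Sum>t\<in>UNIV. (x \<bullet> v t) * (y \<bullet> v t))"
proof -
  have "x \<bullet> y = x \<bullet> (\<Sum>t\<in>UNIV. (y \<bullet> v t) *\<^sub>R v t)" using expand by simp
  then show ?thesis by (simp add: inner_sum_right mult.commute)
qed

lemma inner_self_eq_sum_coords: "x \<bullet> x = (\<Sum>t\<in>UNIV. (x \<bullet> v t)^2)"
  using inner_eq_sum_coords[of x x] by (simp add: power2_eq_square)

lemma matrix_vector_mult_inner_eigvec: "(G *v x) \<bullet> v t = mu t * (x \<bullet> v t)"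
  using symmetric_matrix_inner_commute[OF symmetric, of "v t" x] eigvec by (simp add: inner_commute)

lemma quadratic_form_eq_sum_coords: "x \<bullet> (G *v x) = (\<Sum>t\<in>UNIV. mu t * (x \<bullet> v t)^2)"
  using inner_eq_sum_coords[of x "G *v x"]
  by (simp add: matrix_vector_mult_inner_eigvec power2_eq_square mult_ac)

lemma
  shows independent_eigvec_image: "independent (v ` K)"
    and dim_span_eigvec_image: "dim (span (v ` K)) = card K"
proof -
  have "pairwise orthogonal (v ` K)"
    using orthonormal inj_eigvec by (auto simp: pairwise_def orthogonal_def inj_eq)
  moreover have "0 \<notin> v ` K"
    using inner_eigvec_self by (metis image_iff inner_zero_left zero_neq_one)
  ultimately show ind: "independent (v ` K)" using pairwise_orthogonal_independent by blast
  then show "dim (span (v ` K)) = card K"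
    using inj_eigvec by (simp add: dim_eq_card_independent card_image inj_on_subset)
qed

lemma sum_sq_inner_eigvec_orthonormal:
  assumes "finite U" "\<And>u. u \<in> U \<Longrightarrow> u \<bullet> u = 1"
  shows "(\<Sum>t\<in>UNIV. \<Sum>u\<in>U. (v t \<bullet> u)^2) = real (card U)"
proof -
  have "(\<Sum>t\<in>UNIV. \<Sum>u\<in>U. (v t \<bullet> u)^2) = (\<Sum>u\<in>U. \<Sum>t\<in>UNIV. (u \<bullet> v t)^2)"
    by (subst sum.swap) (simp add: inner_commute)
  also have "\<dots> = (\<Sum>u\<in>U. 1)"
    by (intro sum.cong refl) (simp add: inner_self_eq_sum_coords[symmetric] assms)
  finally show ?thesis by simp
qed

lemma charpoly_eq_prod: "charpoly G = (\<Prod>t\<in>UNIV. [:- mu t, 1:])"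
proof -
  define V :: "real^'n^'n" where "V = (\<chi> i t. v t $ i)"
  define D :: "real^'n^'n" where "D = (\<chi> i j. if i = j then mu i else 0)"
  have "transpose V ** V = mat 1"
    using orthonormal by (simp add: vec_eq_iff matrix_matrix_mult_def V_def transpose_def mat_def inner_vec_def)
  then have VVt: "V ** transpose V = mat 1" using matrix_left_right_inverse by blast
  have "G ** V = V ** D"
    using eigvec by (simp add: vec_eq_iff matrix_matrix_mult_def matrix_vector_mult_def D_def V_def
        if_distrib mult.commute cong: if_cong)
  then have "G = V ** D ** transpose V"
    by (metis VVt matrix_mul_assoc matrix_mul_rid)
  then show ?thesis using charpoly_similar[OF VVt, of D] charpoly_diagonal by (simp add: D_def)
qed

lemma mset_eigvals_desc: "mset (eigvals_desc G) = image_mset mu (mset_set UNIV)"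
  unfolding eigvals_desc_def charpoly_eq_prod
  by (subst proots_prod) (auto simp: sum_unfold_sum_mset)

lemma sorted_rev_eigvals_desc: "sorted (rev (eigvals_desc G))"
  by (simp add: eigvals_desc_def)

lemma length_eigvals_desc: "length (eigvals_desc G) = CARD('n)"
  by (metis mset_eigvals_desc size_image_mset size_mset size_mset_set)

lemma set_eigvals_desc: "set (eigvals_desc G) = range mu"
  by (metis mset_eigvals_desc set_mset_mset finite set_image_mset finite_set_mset_mset_set)

lemma mset_filter_eigvals_desc:
  "mset (filter P (eigvals_desc G)) = image_mset mu (mset_set {t. P (mu t)})"
  by (simp add: mset_eigvals_desc filter_mset_image_mset)

end

locale eigengap = orthonormal_eigenbasis G v mu for G :: "real^'n^'n" and v mu +
  fixes M :: nat
  assumes M_pos: "0 < M" and M_less_card: "M < CARD('n)"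
    and eigval_gap: "eigval G (M + 1) < eigval G M"
begin

definition top_indices :: "'n set" where "top_indices = {t. eigval G M \<le> mu t}"

lemma
  shows filter_ge_eigval_M: "filter (\<lambda>x. eigval G M \<le> x) (eigvals_desc G) = take M (eigvals_desc G)"
    and filter_less_eigval_M: "filter (\<lambda>x. \<not> eigval G M \<le> x) (eigvals_desc G) = drop M (eigvals_desc G)"
  using sorted_rev_filter_ge_nth[OF sorted_rev_eigvals_desc M_pos] eigval_gap M_pos M_less_card
  by (simp_all add: eigval_def length_eigvals_desc)

lemma card_top_indices: "card top_indices = M"
proof -
  have "card top_indices = size (mset (filter (\<lambda>x. eigval G M \<le> x) (eigvals_desc G)))"
    unfolding mset_filter_eigvals_desc top_indices_def by simp
  then show ?thesis using M_less_card by (simp add: filter_ge_eigval_M length_eigvals_desc)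
qed

lemma sum_tail_eigval: "(\<Sum>i = M + 1..CARD('n). eigval G i) = (\<Sum>t\<in>-top_indices. mu t)"
proof -
  have "(\<Sum>t\<in>-top_indices. mu t) = sum_mset (mset (filter (\<lambda>x. \<not> eigval G M \<le> x) (eigvals_desc G)))"
    unfolding mset_filter_eigvals_desc top_indices_def by (simp add: sum_unfold_sum_mset Collect_neg_eq)
  also have "\<dots> = (\<Sum>j<CARD('n) - M. eigvals_desc G ! (M + j))"
    by (simp add: filter_less_eigval_M sum_mset_sum_list sum_list_sum_nth length_eigvals_desc atLeast0LessThan)
  also have "\<dots> = (\<Sum>i = M + 1..CARD('n). eigval G i)"
    unfolding eigval_def
    by (rule sum.reindex_bij_witness[of _ "\<lambda>i. i - M - 1" "\<lambda>j. j + M + 1"]) (use M_less_card in \<open>auto simp: add.commute\<close>)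
  finally show ?thesis by simp
qed

lemma eigval_M_pos:
  assumes "\<And>t. mu t > 0"
  shows "eigval G M > 0"
proof -
  have "eigval G M \<in> set (eigvals_desc G)"
    using M_pos M_less_card by (simp add: eigval_def length_eigvals_desc)
  then show ?thesis using assms set_eigvals_desc by auto
qed

lemma set_take_eigvals_desc: "set (take M (eigvals_desc G)) = {x \<in> range mu. eigval G M \<le> x}"
  by (metis filter_ge_eigval_M set_filter set_eigvals_desc)

lemma eigval_ge_eigval_M: "i \<in> {1..M} \<Longrightarrow> eigval G M \<le> eigval G i"
  using sorted_rev_nth_mono[OF sorted_rev_eigvals_desc, of "i - 1" "M - 1"] M_less_card
  by (auto simp: eigval_def length_eigvals_desc)

lemma eigvec_top_eigenvector:
  assumes "t \<in> top_indices"
  obtains i where "i \<in> {1..M}" "G *v v t = eigval G i *\<^sub>R v t"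
proof -
  have "mu t \<in> set (take M (eigvals_desc G))"
    using assms set_take_eigvals_desc by (auto simp: top_indices_def)
  then obtain j where "j < M" "eigvals_desc G ! j = mu t" by (auto simp: in_set_conv_nth)
  then show ?thesis using that[of "j + 1"] eigvec by (simp add: eigval_def)
qed

lemma top_eigenvector_in_span:
  assumes i: "i \<in> {1..M}" and y: "G *v y = eigval G i *\<^sub>R y"
  shows "y \<in> span (v ` top_indices)"
proof -
  have "y \<bullet> v t = 0" if "t \<notin> top_indices" for t
  proof -
    have "(G *v y) \<bullet> v t = eigval G i * (y \<bullet> v t)" using y by simp
    then have "mu t * (y \<bullet> v t) = eigval G i * (y \<bullet> v t)"
      by (simp only: matrix_vector_mult_inner_eigvec)
    moreover have "mu t < eigval G i"
      using that eigval_ge_eigval_M[OF i] by (auto simp: top_indices_def)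
    ultimately show ?thesis by auto
  qed
  then have "y = (\<Sum>t\<in>top_indices. (y \<bullet> v t) *\<^sub>R v t)"
    using expand[of y] sum.mono_neutral_right[of UNIV top_indices "\<lambda>t. (y \<bullet> v t) *\<^sub>R v t"] by auto
  also have "\<dots> \<in> span (v ` top_indices)" by (intro span_sum span_scale span_base) auto
  finally show ?thesis .
qed

lemma top_eigenspace_eq_span: "top_eigenspace G M = span (v ` top_indices)"
proof
  have "v ` top_indices \<subseteq> {y. \<exists>i\<in>{1..M}. G *v y = eigval G i *\<^sub>R y}"
    using eigvec_top_eigenvector by blast
  then show "span (v ` top_indices) \<subseteq> top_eigenspace G M"
    unfolding top_eigenspace_def by (rule span_mono)
  show "top_eigenspace G M \<subseteq> span (v ` top_indices)"
    unfolding top_eigenspace_def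
    by (rule span_minimal[OF _ subspace_span]) (use top_eigenvector_in_span in blast)
qed

end

context orthonormal_eigenbasis
begin

lemma eigval_pos_if_injective:
  fixes Tm :: "real^'n^'d"
  assumes GT: "G = transpose Tm ** Tm" and inj: "inj ((*v) Tm)"
  shows "mu t > 0"
proof -
  have "Tm *v v t \<noteq> 0"
    using inj inner_eigvec_self matrix_vector_mult_0_right[of Tm] unfolding inj_def
    by (metis inner_zero_left zero_neq_one)
  then have "0 < (Tm *v v t) \<bullet> (Tm *v v t)" by simp
  also have "\<dots> = v t \<bullet> (G *v v t)"
    unfolding GT by (simp add: matrix_vector_mult_inner_transpose matrix_vector_mul_assoc)
  also have "\<dots> = mu t" by (simp add: eigvec)
  finally show ?thesis .
qed

lemma frob_norm_mult_sq:
  fixes Tm :: "real^'n^'d" and E :: "real^'n^'n"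
  assumes GT: "G = transpose Tm ** Tm"
  shows "(frob_norm (Tm ** E))^2 = (\<Sum>t\<in>UNIV. mu t * ((transpose E *v v t) \<bullet> (transpose E *v v t)))"
proof -
  have "(frob_norm (Tm ** E))^2 = (\<Sum>j\<in>UNIV. \<Sum>i\<in>UNIV. ((Tm *v column j E)$i)^2)"
    unfolding frob_norm_def
    by (subst sum.swap) (simp add: sum_nonneg matrix_matrix_mult_def matrix_vector_mult_def column_def)
  also have "\<dots> = (\<Sum>j\<in>UNIV. column j E \<bullet> (G *v column j E))"
  proof (intro sum.cong refl)
    fix j
    have "(\<Sum>i\<in>UNIV. ((Tm *v column j E)$i)^2) = (Tm *v column j E) \<bullet> (Tm *v column j E)"
      by (simp add: inner_vec_def power2_eq_square)
    then show "(\<Sum>i\<in>UNIV. ((Tm *v column j E)$i)^2) = column j E \<bullet> (G *v column j E)"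
      by (simp add: GT matrix_vector_mult_inner_transpose matrix_vector_mul_assoc)
  qed
  also have "\<dots> = (\<Sum>t\<in>UNIV. mu t * (\<Sum>j\<in>UNIV. (column j E \<bullet> v t)^2))"
    by (simp add: quadratic_form_eq_sum_coords sum_distrib_left) (rule sum.swap)
  also have "\<dots> = (\<Sum>t\<in>UNIV. mu t * ((transpose E *v v t) \<bullet> (transpose E *v v t)))"
  proof -
    have "(transpose E *v v t)$j = column j E \<bullet> v t" for j t
      by (simp add: matrix_vector_mult_def transpose_def column_def inner_vec_def)
    then show ?thesis by (simp add: inner_vec_def power2_eq_square)
  qed
  finally show ?thesis .
qed

lemma frob_norm_reconstruction_sq:
  fixes Tm :: "real^'n^'d"
  assumes GT: "G = transpose Tm ** Tm"
  shows "(frob_norm (Tm ** B - Tm))^2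
    = (\<Sum>t\<in>UNIV. mu t * ((transpose B *v v t - v t) \<bullet> (transpose B *v v t - v t)))"
proof -
  have "Tm ** (B - mat 1) = Tm ** B - Tm ** mat 1"
    by (simp add: vec_eq_iff matrix_matrix_mult_def sum_subtractf right_diff_distrib)
  moreover have "transpose (B - mat 1) = transpose B - mat 1"
    by (simp add: vec_eq_iff transpose_def mat_def)
  ultimately show ?thesis
    using frob_norm_mult_sq[OF GT, of "B - mat 1"]
    by (simp add: matrix_vector_mult_diff_rdistrib del: transpose_matrix_vector)
qed

definition eigenprojection :: "'n set \<Rightarrow> real^'n^'n" where
  "eigenprojection K = (\<chi> i j. \<Sum>t\<in>K. v t $ i * v t $ j)"

lemma transpose_eigenprojection_mult_eigvec:
  "transpose (eigenprojection K) *v v s = (if s \<in> K then v s else 0)"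
proof -
  have "(transpose (eigenprojection K) *v v s)$i = (\<Sum>t\<in>K. v t $ i * (v t \<bullet> v s))" for i
    by (simp add: matrix_vector_mult_def transpose_def eigenprojection_def inner_vec_def
        sum_distrib_left sum_distrib_right mult_ac) (rule sum.swap)
  then show ?thesis by (simp add: vec_eq_iff orthonormal if_distrib cong: if_cong)
qed

lemma fixes_eigvec_if_transpose_eq_indicator:
  assumes "\<And>s. transpose B *v v s = (if s \<in> K then v s else 0)" and "t \<in> K"
  shows "B *v v t = v t"
proof -
  have coords: "(B *v v t) \<bullet> v s = (if s = t then 1 else 0)" for s
    using assms by (simp add: matrix_vector_mult_inner_transpose orthonormal del: transpose_matrix_vector)
  have "B *v v t = (\<Sum>s\<in>UNIV. (if s = t then 1 else 0) *\<^sub>R v s)"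
    using expand[of "B *v v t"] by (simp only: coords)
  also have "\<dots> = (\<Sum>s\<in>UNIV. if s = t then v s else 0)" by (intro sum.cong refl) simp
  also have "\<dots> = v t" by simp
  finally show ?thesis .
qed

lemma frob_norm_eigenprojection_error:
  fixes Tm :: "real^'n^'d"
  assumes GT: "G = transpose Tm ** Tm"
  shows "(frob_norm (Tm ** eigenprojection K - Tm))^2 = (\<Sum>t\<in>-K. mu t)"
proof -
  have err: "(transpose (eigenprojection K) *v v t - v t) \<bullet> (transpose (eigenprojection K) *v v t - v t)
      = (if t \<in> K then 0 else 1)" for t
    by (simp add: transpose_eigenprojection_mult_eigvec del: transpose_matrix_vector)
  show ?thesis
    unfolding frob_norm_reconstruction_sq[OF GT] err
    by (simp add: if_distrib sum.If_cases Compl_eq_Diff_UNIV cong: if_cong)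
qed

end

lemma inner_diff_self_orthonormal_span:
  fixes U :: "'a::euclidean_space set"
  assumes fin: "finite U" and po: "pairwise orthogonal U" and n1: "\<And>u. u \<in> U \<Longrightarrow> norm u = 1"
    and xn: "x \<bullet> x = 1" and w: "w \<in> span U"
  shows "(w - x) \<bullet> (w - x) = 1 - (\<Sum>u\<in>U. (x \<bullet> u)^2) + (\<Sum>u\<in>U. (w \<bullet> u - x \<bullet> u)^2)"
proof -
  have wexp: "w = (\<Sum>u\<in>U. (w \<bullet> u) *\<^sub>R u)" using orthonormal_basis_expand[OF po n1 w fin] by simp
  have ww: "w \<bullet> w = (\<Sum>u\<in>U. (w \<bullet> u)^2)"
  proof -
    have "w \<bullet> w = w \<bullet> (\<Sum>u\<in>U. (w \<bullet> u) *\<^sub>R u)" using wexp by simp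
    then show ?thesis by (simp add: inner_sum_right power2_eq_square)
  qed
  have wx: "w \<bullet> x = (\<Sum>u\<in>U. (w \<bullet> u) * (x \<bullet> u))"
  proof -
    have "w \<bullet> x = (\<Sum>u\<in>U. (w \<bullet> u) *\<^sub>R u) \<bullet> x" using wexp by simp
    also have "\<dots> = (\<Sum>u\<in>U. (w \<bullet> u) * (u \<bullet> x))" by (simp add: inner_sum_left)
    finally show ?thesis by (simp add: inner_commute)
  qed
  have "(w - x) \<bullet> (w - x) = w \<bullet> w - 2 * (w \<bullet> x) + x \<bullet> x"
    by (simp add: inner_diff_left inner_diff_right inner_commute)
  also have "\<dots> = 1 - (\<Sum>u\<in>U. (x \<bullet> u)^2) + (\<Sum>u\<in>U. (w \<bullet> u - x \<bullet> u)^2)"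
    unfolding ww wx xn by (simp add: power2_diff sum.distrib sum_subtractf sum_distrib_left algebra_simps)
  finally show ?thesis .
qed

lemma sum_sq_inner_orthonormal_le_1:
  fixes U :: "'a::euclidean_space set"
  assumes fin: "finite U" and po: "pairwise orthogonal U" and n1: "\<And>u. u \<in> U \<Longrightarrow> norm u = 1"
    and xn: "x \<bullet> x = 1"
  shows "(\<Sum>u\<in>U. (x \<bullet> u)^2) \<le> 1"
proof -
  define w where "w = (\<Sum>u\<in>U. (x \<bullet> u) *\<^sub>R u)"
  have "w \<in> span U" unfolding w_def by (intro span_sum span_scale span_base)
  moreover have "w \<bullet> u = x \<bullet> u" if "u \<in> U" for u
  proof -
    have "w \<bullet> u = (\<Sum>u'\<in>U. if u' = u then x \<bullet> u else 0)"
      unfolding w_def inner_sum_left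
      by (intro sum.cong refl) (use that po n1 in \<open>auto simp: pairwise_def orthogonal_def norm_eq_1\<close>)
    then show ?thesis using that fin by simp
  qed
  ultimately have "(w - x) \<bullet> (w - x) = 1 - (\<Sum>u\<in>U. (x \<bullet> u)^2)"
    using inner_diff_self_orthonormal_span[OF fin po n1 xn] by simp
  then show ?thesis using inner_ge_zero[of "w - x"] by linarith
qed

text \<open>For \<open>K = {t. c \<le> mu t}\<close>, \<open>0 \<le> p \<le> 1\<close>, \<open>\<Sum> p \<le> card K\<close> and \<open>e \<ge> 0\<close> all four terms on the
  right are nonnegative.\<close>
lemma weighted_deficit_minus_tail:
  fixes mu p e :: "'n::finite \<Rightarrow> real"
  shows "(\<Sum>t\<in>UNIV. mu t * (1 - p t + e t)) - (\<Sum>t\<in>-K. mu t)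
    = (\<Sum>t\<in>K. (mu t - c) * (1 - p t)) + c * (real (card K) - (\<Sum>t\<in>UNIV. p t))
      + (\<Sum>t\<in>-K. (c - mu t) * p t) + (\<Sum>t\<in>UNIV. mu t * e t)"
proof -
  have split: "(\<Sum>t\<in>UNIV. f t) = (\<Sum>t\<in>K. f t) + (\<Sum>t\<in>-K. f t)" for f :: "'n \<Rightarrow> real"
    using sum.subset_diff[of K UNIV f] by (simp add: Compl_eq_Diff_UNIV add.commute)
  show ?thesis
    unfolding split[of "\<lambda>t. mu t * (1 - p t + e t)"] split[of p] split[of "\<lambda>t. mu t * e t"]
    by (simp add: algebra_simps sum.distrib sum_subtractf sum_distrib_left)
qed

lemma weighted_deficit_eq_tail_imp:
  fixes mu p e :: "'n::finite \<Rightarrow> real"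
  assumes K: "K = {t. c \<le> mu t}" and c: "c > 0" and mu: "\<And>t. mu t > 0"
    and p: "\<And>t. 0 \<le> p t \<and> p t \<le> 1" and psum: "(\<Sum>t\<in>UNIV. p t) \<le> real (card K)"
    and e: "\<And>t. e t \<ge> 0"
    and eq: "(\<Sum>t\<in>UNIV. mu t * (1 - p t + e t)) = (\<Sum>t\<in>-K. mu t)"
  shows "e t = 0" "t \<in> K \<Longrightarrow> p t = 1" "t \<notin> K \<Longrightarrow> p t = 0"
proof -
  have T1: "(\<Sum>t\<in>K. (mu t - c) * (1 - p t)) \<ge> 0" using K p by (intro sum_nonneg) auto
  have T2: "c * (real (card K) - (\<Sum>t\<in>UNIV. p t)) \<ge> 0" using c psum by simp
  have T3: "(\<Sum>t\<in>-K. (c - mu t) * p t) \<ge> 0" using K p by (intro sum_nonneg) auto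
  have T4: "(\<Sum>t\<in>UNIV. mu t * e t) \<ge> 0" using mu e by (intro sum_nonneg) (simp add: less_imp_le)
  have zero: "(\<Sum>t\<in>K. (mu t - c) * (1 - p t)) = 0" "c * (real (card K) - (\<Sum>t\<in>UNIV. p t)) = 0"
    "(\<Sum>t\<in>-K. (c - mu t) * p t) = 0" "(\<Sum>t\<in>UNIV. mu t * e t) = 0"
    using weighted_deficit_minus_tail[of mu p e K c] eq T1 T2 T3 T4 by linarith+
  have "mu t * e t = 0"
    using zero(4) sum_nonneg_eq_0_iff[of UNIV "\<lambda>t. mu t * e t"] mu e by (simp add: less_imp_le)
  then show "e t = 0" using mu[of t] by simp
  show p0: "p t = 0" if "t \<notin> K" for t
  proof -
    have "(c - mu t) * p t = 0"
      using zero(3) sum_nonneg_eq_0_iff[of "-K" "\<lambda>t. (c - mu t) * p t"] K p that by force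
    moreover have "c - mu t > 0" using K that by auto
    ultimately show ?thesis by simp
  qed
  show "p t = 1" if "t \<in> K"
  proof -
    have "(\<Sum>t\<in>UNIV. p t) = (\<Sum>t\<in>K. p t)"
      using p0 by (intro sum.mono_neutral_right) auto
    then have "(\<Sum>t\<in>K. 1 - p t) = 0" using zero(2) c by (simp add: sum_subtractf)
    then show ?thesis
      using sum_nonneg_eq_0_iff[of K "\<lambda>t. 1 - p t"] p that by simp
  qed
qed

context eigengap
begin

lemma optimal_low_rank_images:
  assumes mu: "\<And>t. mu t > 0"
    and U: "finite U" "pairwise orthogonal U" "\<And>u. u \<in> U \<Longrightarrow> norm u = 1" "card U \<le> M"
    and w: "\<And>t. w t \<in> span U"
    and opt: "(\<Sum>t\<in>UNIV. mu t * ((w t - v t) \<bullet> (w t - v t))) = (\<Sum>t\<in>-top_indices. mu t)"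
  shows "w t = (if t \<in> top_indices then v t else 0)"
proof -
  define p where "p t = (\<Sum>u\<in>U. (v t \<bullet> u)^2)" for t
  define e where "e t = (\<Sum>u\<in>U. (w t \<bullet> u - v t \<bullet> u)^2)" for t
  have err: "(w t - v t) \<bullet> (w t - v t) = 1 - p t + e t" for t
    unfolding p_def e_def by (rule inner_diff_self_orthonormal_span[OF U(1-3) inner_eigvec_self w])
  have p_bounds: "0 \<le> p t \<and> p t \<le> 1" for t
    unfolding p_def using sum_sq_inner_orthonormal_le_1[OF U(1-3)] by (simp add: sum_nonneg)
  have p_sum: "(\<Sum>t\<in>UNIV. p t) \<le> real (card top_indices)"
    using sum_sq_inner_eigvec_orthonormal[OF U(1)] U(3,4) card_top_indices unfolding p_def
    by (simp add: norm_eq_1)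
  have e_nonneg: "e t \<ge> 0" for t unfolding e_def by (simp add: sum_nonneg)
  have "(\<Sum>t\<in>UNIV. mu t * (1 - p t + e t)) = (\<Sum>t\<in>-top_indices. mu t)"
    using opt by (simp only: err)
  note gap = weighted_deficit_eq_tail_imp[OF top_indices_def eigval_M_pos[OF mu] mu p_bounds p_sum e_nonneg this]
  have "w t \<bullet> u = v t \<bullet> u" if "u \<in> U" for u
    using gap(1)[of t] sum_nonneg_eq_0_iff[OF U(1), of "\<lambda>u. (w t \<bullet> u - v t \<bullet> u)^2"] that
    unfolding e_def by simp
  then have wexp: "w t = (\<Sum>u\<in>U. (v t \<bullet> u) *\<^sub>R u)"
    using orthonormal_basis_expand[OF U(2,3) w U(1)] by (metis (no_types, lifting) sum.cong)
  show ?thesis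
  proof (cases "t \<in> top_indices")
    case True
    then have "(w t - v t) \<bullet> (w t - v t) = 0" using err gap by simp
    then show ?thesis using True by simp
  next
    case False
    then have "v t \<bullet> u = 0" if "u \<in> U" for u
      using gap(3) sum_nonneg_eq_0_iff[OF U(1), of "\<lambda>u. (v t \<bullet> u)^2"] that unfolding p_def by simp
    then show ?thesis using False wexp by simp
  qed
qed

end

lemma columns_basis_if_product_fixes:
  fixes We :: "real^'m^'n" and Wd :: "real^'n^'m" and S :: "(real^'n) set"
  assumes ind: "independent S" and card: "card S = CARD('m)"
    and fixed: "\<And>y. y \<in> S \<Longrightarrow> (We ** Wd) *v y = y"
  defines "x \<equiv> \<lambda>m. column m We"
  shows "inj x" "independent (range x)" "span (range x) = span S"
proof -
  have "S \<subseteq> span (range x)"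
  proof
    fix y assume "y \<in> S"
    then have "y = We *v (Wd *v y)" using fixed by (simp add: matrix_vector_mul_assoc)
    moreover have "columns We = range x" by (auto simp: columns_def x_def)
    ultimately show "y \<in> span (range x)"
      using matrix_vector_mult_in_columnspace[of We "Wd *v y"] by simp
  qed
  then have sub: "span S \<subseteq> span (range x)" by (rule span_minimal[OF _ subspace_span])
  have "dim S = CARD('m)" using dim_eq_card_independent[OF ind] card by simp
  then have dim: "CARD('m) \<le> dim (span (range x))" using dim_subset[OF sub] by simp
  have dim_le: "dim (span (range x)) \<le> card (range x)" by (simp add: dim_le_card')
  moreover have "card (range x) \<le> CARD('m)" by (rule card_image_le) simp
  ultimately have card_eq: "card (range x) = CARD('m)" using dim by simp
  then show "inj x" using eq_card_imp_inj_on[of UNIV x] by simp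
  show "independent (range x)"
    using card_le_dim_spanning[of "range x" "span (range x)"] dim card_eq by (auto intro: span_base)
  show "span (range x) = span S"
    using subspace_dim_equal[OF subspace_span subspace_span sub] dim dim_le card_eq \<open>dim S = CARD('m)\<close>
    by simp
qed

lemma softmax_enc_pos: "softmax_enc \<kappa> A $ k $ m > 0"
  by (simp add: softmax_enc_def softmax_def transpose_def column_def sum_pos)

lemma orthonormal_basis_row_space:
  fixes Wd :: "real^'n^'m"
  obtains U where "finite U" "pairwise orthogonal U" "\<And>u. u \<in> U \<Longrightarrow> norm u = 1"
    "card U \<le> CARD('m)" "\<And>y. transpose Wd *v y \<in> span U"
proof -
  define R where "R = span (columns (transpose Wd))"
  obtain U where U: "U \<subseteq> R" "pairwise orthogonal U" "\<And>x. x \<in> U \<Longrightarrow> norm x = 1"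
    "independent U" "card U = dim R" "span U = R"
    using orthonormal_basis_subspace[OF subspace_span, of "columns (transpose Wd)"] unfolding R_def
    by blast
  have cols: "columns (transpose Wd) = range (\<lambda>i. column i (transpose Wd))"
    by (auto simp: columns_def)
  have "dim R \<le> card (columns (transpose Wd))"
    unfolding R_def dim_span cols by (rule dim_le_card') simp
  also have "\<dots> \<le> CARD('m)" unfolding cols by (rule card_image_le) simp
  finally have "card U \<le> CARD('m)" using U(5) by simp
  moreover have "transpose Wd *v y \<in> span U" for y
    unfolding U(6) R_def by (rule matrix_vector_mult_in_columnspace)
  ultimately show ?thesis using that finiteI_independent[OF U(4)] U(2,3) by blast
qed

context eigengap
begin

lemma softmax_optimum_imp_positive_basis:
  fixes Tm :: "real^'n^'d" and A :: "real^'m::finite^'n" and Wd :: "real^'n^'m"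
  assumes GT: "G = transpose Tm ** Tm" and mu: "\<And>t. mu t > 0" and M: "CARD('m) = M"
    and opt: "(frob_norm (Tm ** softmax_enc \<kappa> A ** Wd - Tm))^2 = (\<Sum>t\<in>-top_indices. mu t)"
  shows "\<exists>x :: 'm \<Rightarrow> real^'n. inj x \<and> independent (range x) \<and> (\<forall>m. x m \<in> span (v ` top_indices))
    \<and> (\<forall>m k. x m $ k > 0)"
proof -
  define We where "We = softmax_enc \<kappa> A"
  define B where "B = We ** Wd"
  obtain U where U: "finite U" "pairwise orthogonal U" "\<And>u. u \<in> U \<Longrightarrow> norm u = 1" "card U \<le> M"
    and rows: "\<And>y. transpose Wd *v y \<in> span U"
    using orthonormal_basis_row_space[of Wd] M by metis
  have rows_in_span: "transpose B *v v t \<in> span U" for t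
    unfolding B_def matrix_transpose_mul matrix_vector_mul_assoc[symmetric] by (rule rows)
  have opt_rows: "(\<Sum>t\<in>UNIV. mu t * ((transpose B *v v t - v t) \<bullet> (transpose B *v v t - v t)))
      = (\<Sum>t\<in>-top_indices. mu t)"
    using opt frob_norm_reconstruction_sq[OF GT, of B] by (simp add: B_def We_def matrix_mul_assoc)
  have proj: "transpose B *v v t = (if t \<in> top_indices then v t else 0)" for t
    using optimal_low_rank_images[OF mu U rows_in_span opt_rows] .
  have fixed: "(We ** Wd) *v y = y" if "y \<in> v ` top_indices" for y
    using that fixes_eigvec_if_transpose_eq_indicator[OF proj] unfolding B_def by blast
  have card_top_eigvecs: "card (v ` top_indices) = CARD('m)"
    using card_image[OF inj_on_subset[OF inj_eigvec]] card_top_indices M by simp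
  have basis: "inj (\<lambda>m. column m We)" "independent (range (\<lambda>m. column m We))"
      "span (range (\<lambda>m. column m We)) = span (v ` top_indices)"
    using columns_basis_if_product_fixes[OF independent_eigvec_image card_top_eigvecs, of We Wd] fixed
    by blast+
  show ?thesis
  proof (intro exI[of _ "\<lambda>m. column m We"] conjI allI)
    show "inj (\<lambda>m. column m We)" "independent (range (\<lambda>m. column m We))" by (fact basis)+
    show "column m We \<in> span (v ` top_indices)" for m
      unfolding basis(3)[symmetric] by (rule span_base) simp
    show "column m We $ k > 0" for m k unfolding We_def by (simp add: column_def softmax_enc_pos)
  qed
qed

end

lemma softmax_enc_ln:
  fixes p :: "'m::finite \<Rightarrow> real^'t"
  assumes "\<kappa> \<noteq> 0" and "\<And>m k. p m $ k > 0" and "\<And>m. (\<Sum>k\<in>UNIV. p m $ k) = 1"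
  shows "softmax_enc \<kappa> (\<chi> k m. \<kappa> * ln (p m $ k)) = (\<chi> k m. p m $ k)"
  using assms by (simp add: softmax_enc_def softmax_def vec_eq_iff transpose_def column_def)

context orthonormal_eigenbasis
begin

lemma eigvec_coords_in_spanning_family:
  fixes x :: "'m::finite \<Rightarrow> real^'n"
  assumes card: "card K = CARD('m)" and inj: "inj x" and ind: "independent (range x)"
    and in_span: "\<And>m. x m \<in> span (v ` K)"
  obtains a where "\<And>t. t \<in> K \<Longrightarrow> v t = (\<Sum>m\<in>UNIV. a t m *\<^sub>R x m)"
proof -
  have "span (v ` K) \<subseteq> span (range x)"
  proof (rule card_ge_dim_independent)
    show "range x \<subseteq> span (v ` K)" using in_span by auto
    show "dim (span (v ` K)) \<le> card (range x)"
      using dim_span_eigvec_image card card_image[OF inj] by simp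
  qed (rule ind)
  have "\<exists>a. v t = (\<Sum>m\<in>UNIV. a m *\<^sub>R x m)" if "t \<in> K" for t
  proof -
    have "v t \<in> span (range x)" using that \<open>span (v ` K) \<subseteq> span (range x)\<close> span_base by blast
    then obtain u where "v t = (\<Sum>y\<in>range x. u y *\<^sub>R y)" using span_finite[of "range x"] by auto
    also have "\<dots> = (\<Sum>m\<in>UNIV. u (x m) *\<^sub>R x m)" using sum.reindex[OF inj, of "\<lambda>y. u y *\<^sub>R y"] by simp
    finally show ?thesis by (intro exI[of _ "\<lambda>m. u (x m)"])
  qed
  then show ?thesis using that by metis
qed

lemma positive_basis_imp_softmax_factorization:
  fixes x :: "'m::finite \<Rightarrow> real^'n"
  assumes \<kappa>: "\<kappa> \<noteq> 0" and card: "card K = CARD('m)" and inj: "inj x" and ind: "independent (range x)"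
    and in_span: "\<And>m. x m \<in> span (v ` K)" and pos: "\<And>m k. x m $ k > 0"
  shows "\<exists>(A :: real^'m^'n) Wd. softmax_enc \<kappa> A ** Wd = eigenprojection K"
proof -
  define s where "s m = (\<Sum>k\<in>UNIV. x m $ k)" for m
  have s_pos: "s m > 0" for m unfolding s_def using pos by (intro sum_pos) auto
  define p where "p m = (1 / s m) *\<^sub>R x m" for m
  have x_eq: "x m $ k = s m * p m $ k" for m k unfolding p_def using s_pos[of m] by simp
  have "p m $ k > 0" for m k unfolding p_def using pos s_pos by simp
  moreover have "(\<Sum>k\<in>UNIV. p m $ k) = 1" for m
    unfolding p_def using s_pos[of m] by (simp add: sum_divide_distrib[symmetric] s_def)
  ultimately have We: "softmax_enc \<kappa> (\<chi> k m. \<kappa> * ln (p m $ k)) = (\<chi> k m. p m $ k)"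
    by (rule softmax_enc_ln[OF \<kappa>])
  obtain a where a: "\<And>t. t \<in> K \<Longrightarrow> v t = (\<Sum>m\<in>UNIV. a t m *\<^sub>R x m)"
    using eigvec_coords_in_spanning_family[OF card inj ind in_span] by blast
  define Wd :: "real^'n^'m" where "Wd = (\<chi> m j. \<Sum>t\<in>K. a t m * s m * v t $ j)"
  have "((\<chi> k m. p m $ k) ** Wd)$i$j = (eigenprojection K)$i$j" for i j
  proof -
    have "((\<chi> k m. p m $ k) ** Wd)$i$j = (\<Sum>m\<in>UNIV. p m $ i * (\<Sum>t\<in>K. a t m * s m * v t $ j))"
      by (simp add: matrix_matrix_mult_def Wd_def)
    also have "\<dots> = (\<Sum>t\<in>K. (\<Sum>m\<in>UNIV. a t m * x m $ i) * v t $ j)"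
      by (simp add: sum_distrib_left sum_distrib_right x_eq mult_ac) (rule sum.swap)
    also have "\<dots> = (\<Sum>t\<in>K. v t $ i * v t $ j)"
    proof (intro sum.cong refl)
      fix t assume "t \<in> K"
      then have "v t $ i = (\<Sum>m\<in>UNIV. a t m * x m $ i)" using a by simp
      then show "(\<Sum>m\<in>UNIV. a t m * x m $ i) * v t $ j = v t $ i * v t $ j" by simp
    qed
    finally show ?thesis by (simp add: eigenprojection_def)
  qed
  then have "softmax_enc \<kappa> (\<chi> k m. \<kappa> * ln (p m $ k)) ** Wd = eigenprojection K"
    unfolding We by (simp add: vec_eq_iff)
  then show ?thesis by blast
qed

end

context eigengap
begin

lemma positive_basis_imp_softmax_optimum:
  fixes Tm :: "real^'n^'d" and x :: "'m::finite \<Rightarrow> real^'n"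
  assumes GT: "G = transpose Tm ** Tm" and \<kappa>: "\<kappa> \<noteq> 0" and M: "CARD('m) = M"
    and "inj x" "independent (range x)" "\<And>m. x m \<in> span (v ` top_indices)" "\<And>m k. x m $ k > 0"
  shows "\<exists>(A :: real^'m^'n) Wd. (frob_norm (Tm ** softmax_enc \<kappa> A ** Wd - Tm))^2 = (\<Sum>t\<in>-top_indices. mu t)"
proof -
  obtain A :: "real^'m^'n" and Wd where "softmax_enc \<kappa> A ** Wd = eigenprojection top_indices"
    using positive_basis_imp_softmax_factorization[OF \<kappa> _ assms(4-7)] card_top_indices M by auto
  then have "(frob_norm (Tm ** softmax_enc \<kappa> A ** Wd - Tm))^2 = (\<Sum>t\<in>-top_indices. mu t)"
    using frob_norm_eigenprojection_error[OF GT] by (simp add: matrix_mul_assoc[symmetric])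
  then show ?thesis by blast
qed

end

theorem mainTheorem3:
  fixes Tm :: "real^'t^'d" and \<kappa> :: real
  assumes "rank Tm = CARD('t)"
    and "CARD('m) < CARD('t)"
    and "\<kappa> > 0"
    and "eigval (transpose Tm ** Tm) CARD('m) > eigval (transpose Tm ** Tm) (CARD('m) + 1)"
  shows "(\<exists>(A :: real^'m^'t) (Wd :: real^'t^'m).
            (frob_norm (Tm ** softmax_enc \<kappa> A ** Wd - Tm))^2
              = (\<Sum>i = CARD('m) + 1..CARD('t). eigval (transpose Tm ** Tm) i))
    \<longleftrightarrow> (\<exists>x :: 'm \<Rightarrow> real^'t. inj x \<and> independent (range x)
            \<and> (\<forall>m. x m \<in> top_eigenspace (transpose Tm ** Tm) CARD('m))
            \<and> (\<forall>m k. x m $ k > 0))"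
proof -
  define G where "G = transpose Tm ** Tm"
  have sym: "transpose G = G" unfolding G_def by (simp add: matrix_transpose_mul)
  obtain v :: "'t \<Rightarrow> real^'t" and mu where
    "\<And>s t. v s \<bullet> v t = (if s = t then 1 else 0)" "\<And>t. G *v v t = mu t *\<^sub>R v t"
    "\<And>x. (\<Sum>t\<in>UNIV. (x \<bullet> v t) *\<^sub>R v t) = x"
    using symmetric_matrix_orthonormal_eigenbasis[OF sym] by blast
  then interpret eigengap G v mu "CARD('m)"
    using sym assms(2,4) by unfold_locales (simp_all add: G_def)
  have mu: "mu t > 0" for t
    using eigval_pos_if_injective[OF G_def] full_rank_injective[THEN iffD1, OF assms(1)] .
  have \<kappa>: "\<kappa> \<noteq> 0" using assms(3) by simp
  show ?thesis
    unfolding G_def[symmetric] sum_tail_eigval top_eigenspace_eq_span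
    using softmax_optimum_imp_positive_basis[OF G_def mu refl, of \<kappa>]
      positive_basis_imp_softmax_optimum[OF G_def \<kappa> refl]
    by blast
qed

end
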